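(* Let $g\colon\mathbb{R}^d\to[0,\infty)$ be a bounded non-negative function with $\|g\|_\infty\ge1$, and suppose $g\le\ell_u$ pointwise for some $u\in\mathbb{R}^d$ with $0<|u|<1$. Then \[ g^\circ(u)\ge \frac{g^\circ(0)}{e}. \]
   Context: The height function is $\hbar(x)=\sqrt{1-|x|^2}$ for $|x|\le1$ and $\hbar(x)=0$ otherwise. For $|u|<1$, $\ell_u(x)=\hbar(u)\exp\!\big(-\frac{1}{\hbar^2(u)}\langle u,x-u\rangle\big)$. The polar function of a non-negative function $g$ is $g^\circ(p)=\inf_{\{x: g(x)>0\}}\frac{e^{-\langle p,x\rangle}}{g(x)}$. $\|\cdot\|_\infty$ is the supremum norm. *)

theory Defs
  imports "HOL-Analysis.Analysis"
begin

definition hbar :: "'a::euclidean_space \<Rightarrow> real" where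
  "hbar x = (if norm x \<le> 1 then sqrt (1 - (norm x)\<^sup>2) else 0)"

definition ell :: "'a::euclidean_space \<Rightarrow> 'a \<Rightarrow> real" where
  "ell u x = hbar u * exp (- (1 / (hbar u)\<^sup>2) * (u \<bullet> (x - u)))"

definition polar :: "('a::euclidean_space \<Rightarrow> real) \<Rightarrow> 'a \<Rightarrow> real" where
  "polar g p = (INF x\<in>{x. g x > 0}. exp (- (p \<bullet> x)) / g x)"

definition sup_norm :: "('a \<Rightarrow> real) \<Rightarrow> real" where
  "sup_norm g = (SUP x. \<bar>g x\<bar>)"

end

theory Submission
  imports Defs
begin

text \<open>Compare the quotients \<open>exp (- u\<bullet>x) / g x\<close> defining the polar at \<open>u\<close> with the
  quotients \<open>1 / g x\<close> defining it at \<open>0\<close>. Where \<open>u\<bullet>x \<le> 1\<close> the numerator is at least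
  \<open>1/e\<close>. Where \<open>t = u\<bullet>x \<ge> 1\<close>, the exponent of \<open>\<ell>\<^sub>u\<close> is \<open>-(t - |u|\<^sup>2)/(1 - |u|\<^sup>2) \<le> -t\<close> and
  \<open>hbar u \<le> 1\<close>, so \<open>g \<le> \<ell>\<^sub>u \<le> exp (- u\<bullet>x)\<close> and the quotient is at least \<open>1\<close>, whereas
  \<open>polar g 0 \<le> 1 / sup_norm g \<le> 1\<close>.\<close>

lemma polar_le:
  assumes "g x > 0"
  shows "polar g p \<le> exp (- (p \<bullet> x)) / g x"
proof -
  have "bdd_below ((\<lambda>x. exp (- (p \<bullet> x)) / g x) ` {x. g x > 0})"
    by (rule bdd_belowI[where m = 0]) auto
  with assms show ?thesis
    unfolding polar_def by (auto intro: cINF_lower)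
qed

lemma polar_greatest:
  assumes "\<exists>x. g x > 0" and "\<And>x. g x > 0 \<Longrightarrow> c \<le> exp (- (p \<bullet> x)) / g x"
  shows "c \<le> polar g p"
  unfolding polar_def using assms by (intro cINF_greatest) auto

lemma sup_norm_nonneg_eq_SUP:
  assumes "\<And>x. g x \<ge> 0"
  shows "sup_norm g = (SUP x. g x)"
  unfolding sup_norm_def using assms by (simp add: abs_of_nonneg)

lemma polar_zero_mult_sup_norm_le_one:
  assumes nonneg: "\<And>x. g x \<ge> 0" and bdd: "bdd_above (range g)"
  shows "polar g 0 * sup_norm g \<le> 1"
proof (cases "polar g 0 > 0")
  case True
  have "g x \<le> 1 / polar g 0" for x
  proof (cases "g x > 0")
    case True
    with polar_le[of g x 0] \<open>polar g 0 > 0\<close> show ?thesis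
      by (simp add: field_simps)
  next
    case False
    moreover have "0 < 1 / polar g 0"
      using \<open>polar g 0 > 0\<close> by simp
    ultimately show ?thesis by linarith
  qed
  then have "sup_norm g \<le> 1 / polar g 0"
    unfolding sup_norm_nonneg_eq_SUP[OF nonneg] by (rule cSUP_least[rotated]) simp
  with True show ?thesis by (simp add: field_simps)
next
  case False
  have "0 \<le> sup_norm g"
    unfolding sup_norm_nonneg_eq_SUP[OF nonneg]
    using nonneg cSUP_upper[OF UNIV_I bdd] by (meson order.trans)
  with False have "polar g 0 * sup_norm g \<le> 0"
    by (intro mult_nonpos_nonneg) auto
  then show ?thesis by simp
qed

lemma polar_zero_le_one:
  assumes "\<And>x. g x \<ge> 0" and "bdd_above (range g)" and "1 \<le> sup_norm g"
  shows "polar g 0 \<le> 1"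
proof (cases "polar g 0 \<le> 0")
  case False
  then have "polar g 0 * 1 \<le> polar g 0 * sup_norm g"
    using assms(3) by (intro mult_left_mono) auto
  with polar_zero_mult_sup_norm_le_one[OF assms(1,2)] show ?thesis by simp
qed simp

lemma sup_norm_pos_imp_ex_pos:
  assumes nonneg: "\<And>x. g x \<ge> 0" and "0 < sup_norm g"
  shows "\<exists>x. g x > 0"
proof (rule ccontr)
  assume "\<nexists>x. g x > 0"
  then have "sup_norm g \<le> 0"
    unfolding sup_norm_nonneg_eq_SUP[OF nonneg] by (intro cSUP_least) (auto simp: not_less)
  with assms(2) show False by simp
qed

lemma ell_le_exp_minus_inner:
  fixes u x :: "'a::euclidean_space"
  assumes "norm u < 1" and "1 \<le> u \<bullet> x"
  shows "ell u x \<le> exp (- (u \<bullet> x))"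
proof -
  define h where "h = hbar u"
  have h2: "h\<^sup>2 = 1 - (norm u)\<^sup>2" and h_pos: "0 < h" and h_le: "h \<le> 1"
    using assms(1) by (auto simp: h_def hbar_def abs_square_less_1 abs_square_le_1)
  have "(u \<bullet> x) * h\<^sup>2 \<le> u \<bullet> (x - u)"
    using mult_right_mono[OF assms(2), of "(norm u)\<^sup>2"]
    unfolding h2 inner_diff_right power2_norm_eq_inner[symmetric]
    by (simp add: algebra_simps)
  then have "u \<bullet> x \<le> (1 / h\<^sup>2) * (u \<bullet> (x - u))"
    using h_pos by (simp add: field_simps)
  then have "exp (- (1 / h\<^sup>2) * (u \<bullet> (x - u))) \<le> exp (- (u \<bullet> x))"
    by simp
  moreover have "ell u x \<le> exp (- (1 / h\<^sup>2) * (u \<bullet> (x - u)))"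
    unfolding ell_def h_def[symmetric] using h_le by (simp add: mult_left_le_one_le)
  ultimately show ?thesis by linarith
qed

theorem lemma3p6:
  fixes g :: "'a::euclidean_space \<Rightarrow> real" and u :: 'a
  assumes nonneg: "\<And>x. g x \<ge> 0"
    and bdd: "bdd_above (range g)"
    and norm_ge: "sup_norm g \<ge> 1"
    and u_pos: "0 < norm u" and u_lt: "norm u < 1"
    and le_ell: "\<And>x. g x \<le> ell u x"
  shows "polar g u \<ge> polar g 0 / exp 1"
proof (rule polar_greatest)
  show "\<exists>x. g x > 0"
    using sup_norm_pos_imp_ex_pos[of g] nonneg norm_ge by simp
  fix x assume "g x > 0"
  show "polar g 0 / exp 1 \<le> exp (- (u \<bullet> x)) / g x"
  proof (cases "u \<bullet> x \<le> 1")
    case True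
    have "polar g 0 / exp 1 \<le> (1 / g x) / exp 1"
      using polar_le[of g x 0] \<open>g x > 0\<close>
      by (intro divide_right_mono) auto
    also have "\<dots> = exp (-1) / g x"
      by (simp add: exp_minus field_simps)
    also have "\<dots> \<le> exp (- (u \<bullet> x)) / g x"
      using True \<open>g x > 0\<close> by (simp add: divide_right_mono)
    finally show ?thesis .
  next
    case False
    have "g x \<le> exp (- (u \<bullet> x))"
      using ell_le_exp_minus_inner[OF u_lt, of x] le_ell[of x] False by simp
    with \<open>g x > 0\<close> have "1 \<le> exp (- (u \<bullet> x)) / g x"
      by simp
    moreover have "polar g 0 / exp 1 \<le> 1"
      using polar_zero_le_one[OF nonneg bdd norm_ge] exp_ge_add_one_self[of 1]
      by (simp add: divide_le_eq_1)
    ultimately show ?thesis by linarith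
  qed
qed

end
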